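(* Let $(X,\|\cdot\|)$ be a finite-dimensional Banach space. Then $X$ is convex if and only if for every sequence $\{v_n\}_{n\in\mathbb{N}}$ of vectors in $X$ such that $\|v_{n+m}\|\le\|v_n+v_m\|$ for all $n,m\in\mathbb{N}$, the limit $\lim_{n\to\infty}\frac{v_n}{n}$ exists.
   Context: $\mathbb{N}=\{1,2,3,\dots\}$. A Banach space $X$ is called convex if for all $u,v\in X$ with $u\neq v$ and $\|u\|=\|v\|=1$ we have $\|u+v\|<2$. *)

theory Defs
  imports "HOL-Analysis.Analysis"
begin

text \<open>A normed space is convex (strictly convex) if distinct unit vectors
  u, v satisfy norm (u + v) < 2.\<close>
definition convex_normed_space :: "'a::real_normed_vector itself \<Rightarrow> bool" where
  "convex_normed_space _ \<longleftrightarrow>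
     (\<forall>u v::'a. u \<noteq> v \<and> norm u = 1 \<and> norm v = 1 \<longrightarrow> norm (u + v) < 2)"

end

theory Submission
  imports Defs
begin

text \<open>By Fekete's lemma \<open>\<parallel>v n\<parallel> / n\<close> tends to \<open>L = inf \<parallel>v n\<parallel> / n\<close>. For \<open>p \<le> m\<close> the
  hypothesis gives \<open>\<parallel>v p / p + v m / m\<parallel> \<ge> 2L - d p m\<close>, where the defects
  \<open>d p m = (e m - e (m + p)) / p\<close> of the excess \<open>e n = \<parallel>v n\<parallel> - n L \<ge> 0\<close> telescope in \<open>m\<close>.
  Averaging therefore finds, beyond any \<open>n, n'\<close>, some \<open>m\<close> at which both \<open>d n m\<close> and \<open>d n' m\<close>
  are small. In finite dimensions strict convexity is uniform by compactness, so \<open>v n / n\<close> and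
  \<open>v n' / n'\<close> are both close to \<open>v m / m\<close>, and \<open>v n / n\<close> is a Cauchy sequence.
  Conversely, if distinct unit vectors \<open>x, y\<close> have \<open>\<parallel>x + y\<parallel> = 2\<close>, then \<open>v n = n x\<close> for even
  and \<open>v n = n y\<close> for odd \<open>n\<close> satisfies the hypothesis, while \<open>v n / n\<close> alternates.\<close>

lemma abs_scaleR_infdist_le_norm:
  fixes b y :: "'a::real_normed_vector"
  assumes "subspace T" "y \<in> T"
  shows "\<bar>t\<bar> * infdist b T \<le> norm (t *\<^sub>R b + y)"
proof (cases "t = 0")
  case False
  have "- (1 / t) *\<^sub>R y \<in> T"
    using assms by (intro subspace_neg subspace_scale)
  then have "infdist b T \<le> dist b (- (1 / t) *\<^sub>R y)"
    by (rule infdist_le)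
  moreover have "t *\<^sub>R b + y = t *\<^sub>R (b - (- (1 / t) *\<^sub>R y))"
    using False by (simp add: algebra_simps)
  ultimately show ?thesis
    by (simp add: dist_norm mult_left_mono)
qed simp

lemma closed_if_bounded_seqs_have_convergent_subseqs:
  fixes T :: "'a::metric_space set"
  assumes "\<And>x :: nat \<Rightarrow> 'a. bounded (range x) \<Longrightarrow> range x \<subseteq> T \<Longrightarrow>
             \<exists>l\<in>T. \<exists>r. strict_mono r \<and> (x \<circ> r) \<longlonglongrightarrow> l"
  shows "closed T"
  unfolding closed_sequential_limits
proof (intro allI impI)
  fix x l
  assume x: "(\<forall>n. x n \<in> T) \<and> x \<longlonglongrightarrow> l"
  then have "bounded (range x)"
    using convergent_imp_bounded by blast
  moreover have "range x \<subseteq> T"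
    using x by auto
  ultimately obtain l' r where "l' \<in> T" "strict_mono r" "(x \<circ> r) \<longlonglongrightarrow> l'"
    using assms by blast
  moreover have "(x \<circ> r) \<longlonglongrightarrow> l"
    using x \<open>strict_mono r\<close> by (simp add: LIMSEQ_subseq_LIMSEQ)
  ultimately show "l \<in> T"
    using LIMSEQ_unique by metis
qed

lemma bounded_seq_in_span_insert_decomp:
  fixes x :: "nat \<Rightarrow> 'a::real_normed_vector"
  assumes "closed (span S)" "b \<notin> span S" "bounded (range x)" "range x \<subseteq> span (insert b S)"
  obtains t y where "\<And>n. x n = t n *\<^sub>R b + y n" "range y \<subseteq> span S"
    "bounded (range t)" "bounded (range y)"
proof -
  have d: "infdist b (span S) > 0"
    using assms(1,2) infdist_pos_not_in_closed span_zero by blast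
  have "\<forall>n. \<exists>c. x n - c *\<^sub>R b \<in> span S"
    using assms(4) span_insert[of b S] by auto
  then obtain t where t: "\<And>n. x n - t n *\<^sub>R b \<in> span S"
    by metis
  define y where "y n = x n - t n *\<^sub>R b" for n
  obtain B where B: "\<And>n. norm (x n) \<le> B"
    using assms(3) bounded_iff by (metis rangeI)
  have "\<bar>t n\<bar> * infdist b (span S) \<le> B" for n
    using abs_scaleR_infdist_le_norm[OF subspace_span t[of n], of "t n" b] B[of n] by simp
  then have t_bound: "\<bar>t n\<bar> \<le> B / infdist b (span S)" for n
    using d by (simp add: field_simps)
  have "norm (y n) \<le> B + B / infdist b (span S) * norm b" for n
  proof -
    have "norm (y n) \<le> norm (x n) + \<bar>t n\<bar> * norm b"
      unfolding y_def using norm_triangle_ineq4[of "x n" "t n *\<^sub>R b"] by simp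
    then show ?thesis
      using B[of n] mult_right_mono[OF t_bound[of n] norm_ge_zero[of b]] by linarith
  qed
  moreover have "bounded (range t)"
    using t_bound unfolding bounded_iff by (metis real_norm_def rangeE)
  ultimately show ?thesis
    using that[of t y] t unfolding bounded_iff y_def by auto
qed

lemma bounded_seq_in_finite_span_has_convergent_subseq:
  fixes x :: "nat \<Rightarrow> 'a::real_normed_vector"
  assumes "finite S" "bounded (range x)" "range x \<subseteq> span S"
  shows "\<exists>l\<in>span S. \<exists>r. strict_mono r \<and> (x \<circ> r) \<longlonglongrightarrow> l"
  using assms
proof (induction S arbitrary: x rule: finite_induct)
  case empty
  then have "x = (\<lambda>_. 0)"
    by auto
  then have "(x \<circ> id) \<longlonglongrightarrow> 0"
    by (simp add: o_def)
  then show ?case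
    using strict_mono_id span_zero by blast
next
  case (insert b S)
  show ?case
  proof (cases "b \<in> span S")
    case True
    then show ?thesis
      using insert.IH[OF insert.prems(1)] insert.prems(2) span_redundant by metis
  next
    case False
    have "closed (span S)"
      using insert.IH by (rule closed_if_bounded_seqs_have_convergent_subseqs)
    then obtain t y where x: "\<And>n. x n = t n *\<^sub>R b + y n" and y: "range y \<subseteq> span S"
      and bounded: "bounded (range t)" "bounded (range y)"
      using bounded_seq_in_span_insert_decomp False insert.prems by metis
    obtain l1 r1 where r1: "strict_mono r1" "(t \<circ> r1) \<longlonglongrightarrow> l1"
      using bounded(1) bounded_imp_convergent_subsequence by blast
    have "bounded (range (y \<circ> r1))" "range (y \<circ> r1) \<subseteq> span S"
      using bounded(2) y by (auto intro: bounded_subset)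
    then obtain l2 r2 where r2: "l2 \<in> span S" "strict_mono r2" "(y \<circ> r1 \<circ> r2) \<longlonglongrightarrow> l2"
      using insert.IH by blast
    have x_decomp: "x \<circ> (r1 \<circ> r2) = (\<lambda>k. (t \<circ> r1 \<circ> r2) k *\<^sub>R b + (y \<circ> r1 \<circ> r2) k)"
      by (auto simp: x)
    have "(t \<circ> r1 \<circ> r2) \<longlonglongrightarrow> l1"
      using r1(2) r2(2) LIMSEQ_subseq_LIMSEQ by blast
    then have "(x \<circ> (r1 \<circ> r2)) \<longlonglongrightarrow> l1 *\<^sub>R b + l2"
      unfolding x_decomp by (intro tendsto_intros r2(3))
    moreover have "l1 *\<^sub>R b + l2 \<in> span (insert b S)"
      using r2(1) by (meson span_add span_base span_mono span_scale insertI1 subset_insertI subsetD)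
    ultimately show ?thesis
      using r1(1) r2(2) strict_mono_o by blast
  qed
qed

lemma bounded_seq_has_convergent_subseq_finite_dim:
  fixes x :: "nat \<Rightarrow> 'a::real_normed_vector"
  assumes "finite B" "span B = (UNIV :: 'a set)" "bounded (range x)"
  shows "\<exists>l r. strict_mono r \<and> (x \<circ> r) \<longlonglongrightarrow> l"
  using bounded_seq_in_finite_span_has_convergent_subseq[OF assms(1,3)] assms(2) by blast

lemma bounded_seq_pair_has_convergent_subseq_finite_dim:
  fixes X Y :: "nat \<Rightarrow> 'a::real_normed_vector"
  assumes "finite B" "span B = (UNIV :: 'a set)" "bounded (range X)" "bounded (range Y)"
  obtains s l1 l2 where "strict_mono s" "(\<lambda>k. X (s k)) \<longlonglongrightarrow> l1" "(\<lambda>k. Y (s k)) \<longlonglongrightarrow> l2"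
proof -
  obtain r1 l1 where r1: "strict_mono r1" "(X \<circ> r1) \<longlonglongrightarrow> l1"
    using bounded_seq_has_convergent_subseq_finite_dim[OF assms(1-3)] by blast
  have "bounded (range (Y \<circ> r1))"
    using assms(4) by (auto intro: bounded_subset)
  then obtain r2 l2 where r2: "strict_mono r2" "(Y \<circ> r1 \<circ> r2) \<longlonglongrightarrow> l2"
    using bounded_seq_has_convergent_subseq_finite_dim[OF assms(1,2)] by blast
  have "(X \<circ> r1 \<circ> r2) \<longlonglongrightarrow> l1"
    using LIMSEQ_subseq_LIMSEQ[OF r1(2) r2(1)] .
  then show ?thesis
    using that[OF strict_mono_o[OF r1(1) r2(1)]] r2(2) by (simp add: o_def)
qed

lemma convex_normed_space_eq_if_norm_add_ge:
  fixes x y :: "'a::real_normed_vector"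
  assumes "convex_normed_space TYPE('a)" "norm x \<le> \<rho>" "norm y \<le> \<rho>" "2 * \<rho> \<le> norm (x + y)"
  shows "x = y"
proof (rule ccontr)
  assume "x \<noteq> y"
  have norms: "norm x = \<rho>" "norm y = \<rho>"
    using assms(2-4) norm_triangle_ineq[of x y] by linarith+
  then have "\<rho> > 0"
    using \<open>x \<noteq> y\<close> by (metis norm_eq_zero norm_ge_zero order_less_le)
  define u v where "u = (1 / \<rho>) *\<^sub>R x" and "v = (1 / \<rho>) *\<^sub>R y"
  have "u \<noteq> v" "norm u = 1" "norm v = 1"
    using \<open>x \<noteq> y\<close> norms \<open>\<rho> > 0\<close> by (auto simp: u_def v_def)
  moreover have "norm (u + v) = norm (x + y) / \<rho>"
    using \<open>\<rho> > 0\<close> by (simp add: u_def v_def flip: scaleR_add_right)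
  moreover have "norm (x + y) / \<rho> \<ge> 2"
    using assms(4) \<open>\<rho> > 0\<close> by (simp add: field_simps)
  ultimately show False
    using assms(1) unfolding convex_normed_space_def by fastforce
qed

lemma uniformly_convex_if_finite_dim:
  fixes \<rho> \<epsilon> :: real
  assumes "finite B" "span B = (UNIV :: 'a::real_normed_vector set)"
    and "convex_normed_space TYPE('a)" "\<epsilon> > 0"
  shows "\<exists>\<eta>>0. \<forall>x y :: 'a. norm x \<le> \<rho> + \<eta> \<longrightarrow> norm y \<le> \<rho> + \<eta> \<longrightarrow>
            2 * \<rho> - \<eta> \<le> norm (x + y) \<longrightarrow> norm (x - y) < \<epsilon>"
proof (rule ccontr)
  define \<delta> :: "nat \<Rightarrow> real" where "\<delta> k = inverse (real (Suc k))" for k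
  assume "\<not> ?thesis"
  then have "\<forall>k. \<exists>x y :: 'a. norm x \<le> \<rho> + \<delta> k \<and> norm y \<le> \<rho> + \<delta> k \<and>
               2 * \<rho> - \<delta> k \<le> norm (x + y) \<and> \<epsilon> \<le> norm (x - y)"
    unfolding \<delta>_def by (metis not_less inverse_positive_iff_positive of_nat_0_less_iff zero_less_Suc)
  then obtain X Y :: "nat \<Rightarrow> 'a" where
    X: "\<And>k. norm (X k) \<le> \<rho> + \<delta> k" and Y: "\<And>k. norm (Y k) \<le> \<rho> + \<delta> k" and
    XY: "\<And>k. 2 * \<rho> - \<delta> k \<le> norm (X k + Y k)" "\<And>k. \<epsilon> \<le> norm (X k - Y k)"
    by metis
  have "\<delta> k \<le> 1" for k
    by (simp add: \<delta>_def inverse_le_1_iff)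
  then have "norm (X k) \<le> \<rho> + 1" "norm (Y k) \<le> \<rho> + 1" for k
    using X[of k] Y[of k] by (meson add_left_mono order_trans)+
  then have "bounded (range X)" "bounded (range Y)"
    unfolding bounded_iff by auto
  then obtain s l1 l2 where s: "strict_mono s" and Xs: "(\<lambda>k. X (s k)) \<longlonglongrightarrow> l1"
    and Ys: "(\<lambda>k. Y (s k)) \<longlonglongrightarrow> l2"
    using bounded_seq_pair_has_convergent_subseq_finite_dim[OF assms(1,2)] by metis
  have "(\<lambda>k. \<delta> (s k)) \<longlonglongrightarrow> 0"
    using LIMSEQ_subseq_LIMSEQ[OF LIMSEQ_inverse_real_of_nat s] by (simp add: \<delta>_def o_def)
  then have \<delta>s: "(\<lambda>k. \<rho> + \<delta> (s k)) \<longlonglongrightarrow> \<rho>" "(\<lambda>k. 2 * \<rho> - \<delta> (s k)) \<longlonglongrightarrow> 2 * \<rho>"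
    using tendsto_add[OF tendsto_const, of _ 0 _ \<rho>] tendsto_diff[OF tendsto_const, of _ 0 _ "2 * \<rho>"]
    by auto
  have "norm l1 \<le> \<rho>"
    using LIMSEQ_le[OF tendsto_norm[OF Xs] \<delta>s(1)] X by blast
  moreover have "norm l2 \<le> \<rho>"
    using LIMSEQ_le[OF tendsto_norm[OF Ys] \<delta>s(1)] Y by blast
  moreover have "2 * \<rho> \<le> norm (l1 + l2)"
    using LIMSEQ_le[OF \<delta>s(2) tendsto_norm[OF tendsto_add[OF Xs Ys]]] XY(1) by blast
  ultimately have "l1 = l2"
    using convex_normed_space_eq_if_norm_add_ge[OF assms(3)] by blast
  moreover have "\<epsilon> \<le> norm (l1 - l2)"
    using LIMSEQ_le_const[OF tendsto_norm[OF tendsto_diff[OF Xs Ys]]] XY(2) by blast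
  ultimately show False
    using \<open>\<epsilon> > 0\<close> by simp
qed

lemma subadditive_le_div_mult:
  fixes a :: "nat \<Rightarrow> real"
  assumes nonneg: "\<And>n. a n \<ge> 0"
    and sub: "\<And>n m. n \<ge> 1 \<Longrightarrow> m \<ge> 1 \<Longrightarrow> a (n + m) \<le> a n + a m"
    and "k \<ge> 1"
  shows "a n \<le> real (n div k) * a k + (\<Sum>i<k. a i)"
proof (induction n rule: less_induct)
  case (less n)
  show ?case
  proof (cases "n < k")
    case True
    then show ?thesis
      using nonneg by (simp add: member_le_sum)
  next
    case False
    have "a n \<le> a (n - k) + a k"
      using sub[of "n - k" k] nonneg[of 0] False \<open>k \<ge> 1\<close>
      by (cases "n = k") (auto simp: not_less)
    also have "\<dots> \<le> real ((n - k) div k) * a k + (\<Sum>i<k. a i) + a k"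
      using less.IH[of "n - k"] False \<open>k \<ge> 1\<close> by simp
    also have "\<dots> = real (n div k) * a k + (\<Sum>i<k. a i)"
      using False \<open>k \<ge> 1\<close> by (simp add: le_div_geq algebra_simps)
    finally show ?thesis .
  qed
qed

lemma subadditive_eventually_ratio_less:
  fixes a :: "nat \<Rightarrow> real"
  assumes nonneg: "\<And>n. a n \<ge> 0"
    and sub: "\<And>n m. n \<ge> 1 \<Longrightarrow> m \<ge> 1 \<Longrightarrow> a (n + m) \<le> a n + a m"
    and k: "k \<ge> 1" "a k / real k < y"
  shows "\<forall>\<^sub>F n in sequentially. a n / real n < y"
proof -
  define C where "C = (\<Sum>i<k. a i)"
  have "\<forall>\<^sub>F n in sequentially. C / real n < y - a k / real k"
    using order_tendstoD(2)[OF lim_const_over_n[of C]] k(2) by simp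
  then have "\<forall>\<^sub>F n in sequentially. C / real n < y - a k / real k \<and> n \<ge> 1"
    using eventually_ge_at_top eventually_conj by blast
  then show ?thesis
  proof (rule eventually_mono)
    fix n
    assume n: "C / real n < y - a k / real k \<and> n \<ge> 1"
    have "real (n div k) * real k \<le> real n"
      by (metis div_times_less_eq_dividend of_nat_le_iff of_nat_mult)
    then have "real (n div k) * real k * a k \<le> real n * a k"
      using nonneg[of k] by (rule mult_right_mono)
    then have "real (n div k) * a k \<le> real n * (a k / real k)"
      using k(1) by (simp add: field_simps)
    then have "a n \<le> real n * (a k / real k) + C"
      using subadditive_le_div_mult[OF nonneg sub k(1), of n] unfolding C_def by linarith
    then have "a n / real n \<le> a k / real k + C / real n"
      using n by (simp add: field_simps)
    then show "a n / real n < y"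
      using n by linarith
  qed
qed

theorem fekete_subadditive:
  fixes a :: "nat \<Rightarrow> real"
  assumes nonneg: "\<And>n. a n \<ge> 0"
    and sub: "\<And>n m. n \<ge> 1 \<Longrightarrow> m \<ge> 1 \<Longrightarrow> a (n + m) \<le> a n + a m"
  shows "(\<lambda>n. a n / real n) \<longlonglongrightarrow> Inf {a n / real n | n. n \<ge> 1}"
proof -
  define S where "S = {a n / real n | n. n \<ge> 1}"
  have "S \<noteq> {}"
    unfolding S_def by blast
  have "bdd_below S"
    using nonneg unfolding S_def bdd_below_def by (auto intro!: exI[of _ 0])
  show ?thesis
    unfolding S_def[symmetric]
  proof (rule order_tendstoI)
    fix y
    assume "y < Inf S"
    then have "y < a n / real n" if "n \<ge> 1" for n
      using cInf_lower[OF _ \<open>bdd_below S\<close>, of "a n / real n"] that unfolding S_def by force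
    then show "\<forall>\<^sub>F n in sequentially. y < a n / real n"
      unfolding eventually_sequentially by blast
  next
    fix y
    assume "Inf S < y"
    then obtain k where "k \<ge> 1" "a k / real k < y"
      using cInf_less_iff[OF \<open>S \<noteq> {}\<close> \<open>bdd_below S\<close>] unfolding S_def by blast
    then show "\<forall>\<^sub>F n in sequentially. a n / real n < y"
      using subadditive_eventually_ratio_less[OF nonneg sub] by blast
  qed
qed

lemma sum_lessThan_diff_shift:
  fixes f :: "nat \<Rightarrow> 'a::ab_group_add"
  shows "(\<Sum>i<K. f i - f (i + p)) = (\<Sum>j<p. f j) - (\<Sum>j<p. f (K + j))"
proof (induction K)
  case (Suc K)
  have shift: "(\<Sum>j<p. f (Suc K + j)) = (\<Sum>j<p. f (K + j)) + f (K + p) - f K"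
    using sum_lessThan_telescope[of "\<lambda>j. f (K + j)" p] by (simp add: sum_subtractf algebra_simps)
  have "(\<Sum>i<Suc K. f i - f (i + p)) = (\<Sum>j<p. f j) - (\<Sum>j<p. f (K + j)) + (f K - f (K + p))"
    using Suc.IH by simp
  then show ?case
    unfolding shift by (simp add: algebra_simps)
qed simp

lemma exists_less_if_partial_sums_bounded:
  fixes f :: "nat \<Rightarrow> real"
  assumes "\<And>K. (\<Sum>i<K. f (M + i)) \<le> C" "\<delta> > 0"
  shows "\<exists>m\<ge>M. f m < \<delta>"
proof (rule ccontr)
  assume "\<not> ?thesis"
  then have "real K * \<delta> \<le> C" for K
    using sum_bounded_below[of "{..<K}" \<delta> "\<lambda>i. f (M + i)"] assms(1)[of K]
    by (force simp: not_less)
  moreover obtain K where "C / \<delta> < real K"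
    using reals_Archimedean2 by blast
  then have "C < real K * \<delta>"
    using \<open>\<delta> > 0\<close> by (simp add: pos_divide_less_eq)
  ultimately show False
    by (meson not_less)
qed

lemma exists_small_scaled_decrements:
  fixes e :: "nat \<Rightarrow> real"
  assumes "\<And>n. e n \<ge> 0" "\<delta> > 0"
  shows "\<exists>m\<ge>M. (e m - e (m + p)) / real p + (e m - e (m + q)) / real q < \<delta>"
proof (rule exists_less_if_partial_sums_bounded[OF _ \<open>\<delta> > 0\<close>])
  have decrements: "(\<Sum>i<K. e (M + i) - e (M + i + r)) \<le> (\<Sum>j<r. e (M + j))" for K r
    using sum_lessThan_diff_shift[where f = "\<lambda>i. e (M + i)" and K = K and p = r] assms(1)
    by (simp add: add.assoc sum_nonneg)
  fix K
  have "(\<Sum>i<K. (e (M + i) - e (M + i + p)) / real p + (e (M + i) - e (M + i + q)) / real q) =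
      (\<Sum>i<K. e (M + i) - e (M + i + p)) / real p + (\<Sum>i<K. e (M + i) - e (M + i + q)) / real q"
    by (simp add: sum.distrib sum_divide_distrib)
  also have "\<dots> \<le> (\<Sum>j<p. e (M + j)) / real p + (\<Sum>j<q. e (M + j)) / real q"
    using decrements by (intro add_mono divide_right_mono) auto
  finally show "(\<Sum>i<K. (e (M + i) - e (M + i + p)) / real p + (e (M + i) - e (M + i + q)) / real q)
      \<le> (\<Sum>j<p. e (M + j)) / real p + (\<Sum>j<q. e (M + j)) / real q" .
qed

locale dominated_by_sums =
  fixes v :: "nat \<Rightarrow> 'a::real_normed_vector"
  assumes norm_le_norm_add: "\<And>n m. n \<ge> 1 \<Longrightarrow> m \<ge> 1 \<Longrightarrow> norm (v (n + m)) \<le> norm (v n + v m)"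
begin

definition rate :: real where
  "rate = Inf {norm (v n) / real n | n. n \<ge> 1}"

definition mean :: "nat \<Rightarrow> 'a" where
  "mean n = (1 / real n) *\<^sub>R v n"

definition excess :: "nat \<Rightarrow> real" where
  "excess n = norm (v n) - real n * rate"

definition defect :: "nat \<Rightarrow> nat \<Rightarrow> real" where
  "defect p m = (excess m - excess (m + p)) / real p"

lemma norm_subadditive: "n \<ge> 1 \<Longrightarrow> m \<ge> 1 \<Longrightarrow> norm (v (n + m)) \<le> norm (v n) + norm (v m)"
  using norm_le_norm_add norm_triangle_ineq order_trans by blast

lemma rate_le: "n \<ge> 1 \<Longrightarrow> rate \<le> norm (v n) / real n"
  unfolding rate_def by (rule cInf_lower) (auto intro!: bdd_belowI[of _ 0])

lemma norm_over_n_tendsto_rate: "(\<lambda>n. norm (v n) / real n) \<longlonglongrightarrow> rate"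
  unfolding rate_def using norm_subadditive by (intro fekete_subadditive) auto

lemma excess_nonneg: "excess n \<ge> 0"
  using rate_le[of n] by (cases "n = 0") (auto simp: excess_def field_simps)

lemma excess_subadditive: "n \<ge> 1 \<Longrightarrow> m \<ge> 1 \<Longrightarrow> excess (n + m) \<le> excess n + excess m"
  using norm_subadditive by (simp add: excess_def algebra_simps)

lemma excess_over_n_tendsto_0: "(\<lambda>n. excess n / real n) \<longlonglongrightarrow> 0"
proof -
  have "(\<lambda>n. norm (v n) / real n - rate) \<longlonglongrightarrow> 0"
    using norm_over_n_tendsto_rate by (simp add: LIM_zero)
  moreover have "\<forall>\<^sub>F n in sequentially. norm (v n) / real n - rate = excess n / real n"
    using eventually_ge_at_top[of 1] by eventually_elim (simp add: excess_def field_simps)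
  ultimately show ?thesis
    by (rule Lim_transform_eventually)
qed

lemma norm_mean: "n \<ge> 1 \<Longrightarrow> norm (mean n) = rate + excess n / real n"
  by (simp add: mean_def excess_def field_simps)

lemma defect_ge:
  assumes "p \<ge> 1" "m \<ge> 1"
  shows "- (excess p / real p) \<le> defect p m"
proof -
  have "- excess p \<le> excess m - excess (m + p)"
    using excess_subadditive[OF assms(2,1)] by linarith
  then have "- excess p / real p \<le> (excess m - excess (m + p)) / real p"
    by (rule divide_right_mono) simp
  then show ?thesis
    by (simp add: defect_def)
qed

lemma norm_mean_add_ge:
  assumes "1 \<le> p" "p \<le> m"
  shows "2 * rate - defect p m \<le> norm (mean p + mean m)"
proof -
  have vp: "v p = real p *\<^sub>R mean p" and vm: "v m = real m *\<^sub>R mean m"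
    using assms by (simp_all add: mean_def)
  have "real p \<le> real m"
    using assms by simp
  have "norm (v (m + p)) \<le> norm (v p + v m)"
    using norm_le_norm_add[of p m] assms by (simp add: add.commute)
  also have "v p + v m = real p *\<^sub>R (mean p + mean m) + (real m - real p) *\<^sub>R mean m"
    unfolding vp vm by (simp add: algebra_simps)
  also have "norm \<dots> \<le> real p * norm (mean p + mean m) + (real m - real p) * norm (mean m)"
    using norm_triangle_ineq[of "real p *\<^sub>R (mean p + mean m)" "(real m - real p) *\<^sub>R mean m"]
      \<open>real p \<le> real m\<close> assms by simp
  also have "(real m - real p) * norm (mean m) \<le> (real m - real p) * rate + excess m"
  proof -
    have "(real m - real p) * excess m \<le> real m * excess m"
      using excess_nonneg[of m] by (simp add: mult_right_mono)
    then have "(real m - real p) * (excess m / real m) \<le> excess m"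
      using assms by (simp add: field_simps)
    then show ?thesis
      using norm_mean[of m] assms by (simp add: distrib_left)
  qed
  finally have chain:
    "norm (v (m + p)) \<le> real p * norm (mean p + mean m) + (real m - real p) * rate + excess m"
    by simp
  have "real p * (2 * rate - defect p m) = norm (v (m + p)) - real m * rate + real p * rate - excess m"
    using assms by (simp add: defect_def excess_def field_simps)
  also have "\<dots> \<le> real p * norm (mean p + mean m)"
    using chain by (simp add: algebra_simps)
  finally show ?thesis
    using assms by simp
qed

lemma norm_mean_diff_less:
  assumes \<eta>: "\<forall>x y :: 'a. norm x \<le> rate + \<eta> \<longrightarrow> norm y \<le> rate + \<eta> \<longrightarrow>
      2 * rate - \<eta> \<le> norm (x + y) \<longrightarrow> norm (x - y) < \<epsilon>"
    and "1 \<le> p" "p \<le> m" "excess p / real p \<le> \<eta>" "excess m / real m \<le> \<eta>" "defect p m \<le> \<eta>"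
  shows "norm (mean p - mean m) < \<epsilon>"
proof -
  have "norm (mean p) \<le> rate + \<eta>" "norm (mean m) \<le> rate + \<eta>"
    using norm_mean[of p] norm_mean[of m] assms(2-5) by auto
  moreover have "2 * rate - \<eta> \<le> norm (mean p + mean m)"
    using norm_mean_add_ge[of p m] assms(2,3,6) by simp
  ultimately show ?thesis
    using \<eta> by blast
qed

lemma Cauchy_mean:
  assumes uniformly_convex: "\<And>\<epsilon>. \<epsilon> > 0 \<Longrightarrow> \<exists>\<eta>>0. \<forall>x y :: 'a. norm x \<le> rate + \<eta> \<longrightarrow>
            norm y \<le> rate + \<eta> \<longrightarrow> 2 * rate - \<eta> \<le> norm (x + y) \<longrightarrow> norm (x - y) < \<epsilon>"
  shows "Cauchy mean"
proof (rule metric_CauchyI)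
  fix \<epsilon> :: real
  assume "\<epsilon> > 0"
  then obtain \<eta> where "\<eta> > 0" and \<eta>: "\<forall>x y :: 'a. norm x \<le> rate + \<eta> \<longrightarrow> norm y \<le> rate + \<eta> \<longrightarrow>
      2 * rate - \<eta> \<le> norm (x + y) \<longrightarrow> norm (x - y) < \<epsilon> / 2"
    using uniformly_convex[of "\<epsilon> / 2"] half_gt_zero by blast
  obtain N where N: "\<And>n. n \<ge> N \<Longrightarrow> excess n / real n < \<eta> / 2"
    using order_tendstoD(2)[OF excess_over_n_tendsto_0, of "\<eta> / 2"] \<open>\<eta> > 0\<close>
    unfolding eventually_sequentially by auto
  have "excess k / real k \<le> \<eta>" if "N \<le> k" for k
    using N[OF that] \<open>\<eta> > 0\<close> by linarith
  then have close: "norm (mean p - mean m) < \<epsilon> / 2" if "N < p" "p \<le> m" "defect p m < \<eta>" for p m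
    using norm_mean_diff_less[OF \<eta>, of p m] that by simp
  show "\<exists>M. \<forall>n\<ge>M. \<forall>n'\<ge>M. dist (mean n) (mean n') < \<epsilon>"
  proof (intro exI allI impI)
    fix n n'
    assume n: "Suc N \<le> n" and n': "Suc N \<le> n'"
    obtain m where m: "max n n' \<le> m" and small: "defect n m + defect n' m < \<eta> / 2"
      using exists_small_scaled_decrements[of excess "\<eta> / 2" "max n n'" n n']
        excess_nonneg \<open>\<eta> > 0\<close>
      unfolding defect_def by auto
    have "- (\<eta> / 2) < defect n m" "- (\<eta> / 2) < defect n' m"
      using defect_ge[of n m] defect_ge[of n' m] N[of n] N[of n'] n n' m by auto
    then have "norm (mean n - mean m) < \<epsilon> / 2" "norm (mean n' - mean m) < \<epsilon> / 2"
      using close[of n m] close[of n' m] small n n' m by auto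
    then show "dist (mean n) (mean n') < \<epsilon>"
      using dist_triangle2[of "mean n" "mean n'" "mean m"] by (simp add: dist_norm)
  qed
qed

end

lemma add_le_norm_scaleR_add:
  fixes x y :: "'a::real_normed_vector"
  assumes "norm x = 1" "norm y = 1" "2 \<le> norm (x + y)" "a \<ge> 0" "b \<ge> 0"
  shows "a + b \<le> norm (a *\<^sub>R x + b *\<^sub>R y)"
  using assms
proof (induction a b arbitrary: x y rule: linorder_wlog)
  case (le a b)
  have "b *\<^sub>R (x + y) = (a *\<^sub>R x + b *\<^sub>R y) + (b - a) *\<^sub>R x"
    by (simp add: algebra_simps)
  then have "norm (b *\<^sub>R (x + y)) \<le> norm (a *\<^sub>R x + b *\<^sub>R y) + (b - a)"
    using norm_triangle_ineq[of "a *\<^sub>R x + b *\<^sub>R y" "(b - a) *\<^sub>R x"] le by simp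
  moreover have "2 * b \<le> norm (b *\<^sub>R (x + y))"
    using le by (simp add: mult_left_mono mult.commute)
  ultimately show ?case
    by linarith
next
  case (sym a b)
  then show ?case
    by (simp add: add.commute)
qed

lemma divergent_dominated_by_sums_if_not_convex:
  assumes "\<not> convex_normed_space TYPE('a)"
  obtains v :: "nat \<Rightarrow> 'a::real_normed_vector"
  where "dominated_by_sums v" "\<not> convergent (\<lambda>n. (1 / real n) *\<^sub>R v n)"
proof -
  obtain x y :: 'a where xy: "x \<noteq> y" "norm x = 1" "norm y = 1" "2 \<le> norm (x + y)"
    using assms unfolding convex_normed_space_def by (meson not_less)
  have yx: "2 \<le> norm (y + x)"
    using xy(4) by (simp add: add.commute)
  define v where "v n = real n *\<^sub>R (if even n then x else y)" for n
  have "norm (v (n + m)) \<le> norm (v n + v m)" for n m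
  proof -
    have "norm (v (n + m)) = real n + real m"
      using xy by (simp add: v_def)
    also have "\<dots> \<le> norm (v n + v m)"
      using add_le_norm_scaleR_add[OF xy(2-4)] add_le_norm_scaleR_add[OF xy(3,2) yx] xy
      by (auto simp: v_def add.commute scaleR_add_left[symmetric] simp del: scaleR_add_left)
    finally show ?thesis .
  qed
  then have "dominated_by_sums v"
    by unfold_locales
  moreover have "\<not> convergent (\<lambda>n. (1 / real n) *\<^sub>R v n)"
  proof
    assume "convergent (\<lambda>n. (1 / real n) *\<^sub>R v n)"
    then obtain l where l: "(\<lambda>n. (1 / real n) *\<^sub>R v n) \<longlonglongrightarrow> l"
      unfolding convergent_def by blast
    have "(\<lambda>k. x) \<longlonglongrightarrow> l" "(\<lambda>k. y) \<longlonglongrightarrow> l"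
      using LIMSEQ_subseq_LIMSEQ[OF l, of "\<lambda>k. 2 * k + 2"] LIMSEQ_subseq_LIMSEQ[OF l, of "\<lambda>k. 2 * k + 1"]
      by (simp_all add: strict_mono_def v_def o_def)
    then show False
      using xy(1) LIMSEQ_unique tendsto_const by metis
  qed
  ultimately show ?thesis
    using that by blast
qed

theorem mainTheorem2:
  assumes fin_dim: "\<exists>B::'a::banach set. finite B \<and> span B = UNIV"
  shows "convex_normed_space TYPE('a) \<longleftrightarrow>
    (\<forall>v::nat \<Rightarrow> 'a.
       (\<forall>n m. n \<ge> 1 \<longrightarrow> m \<ge> 1 \<longrightarrow> norm (v (n + m)) \<le> norm (v n + v m)) \<longrightarrow>
       convergent (\<lambda>n. (1 / real n) *\<^sub>R v n))"
proof -
  obtain B :: "'a set" where B: "finite B" "span B = UNIV"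
    using fin_dim by blast
  have "convergent (\<lambda>n. (1 / real n) *\<^sub>R v n)"
    if "convex_normed_space TYPE('a)" "dominated_by_sums v" for v :: "nat \<Rightarrow> 'a"
  proof -
    interpret dominated_by_sums v
      by (fact that(2))
    have "Cauchy mean"
      by (rule Cauchy_mean[OF uniformly_convex_if_finite_dim[OF B that(1)]])
    moreover have "mean = (\<lambda>n. (1 / real n) *\<^sub>R v n)"
      by (simp add: fun_eq_iff mean_def)
    ultimately show ?thesis
      using Cauchy_convergent_iff by metis
  qed
  then show ?thesis
    using divergent_dominated_by_sums_if_not_convex unfolding dominated_by_sums_def by metis
qed

end
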